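(* Let $T>0$, $\epsilon>0$, $\delta\in(0,1)$, and let $\mathcal{R}$ consist of $M=\frac{12T}{n\epsilon^2}\ln\frac{2n}{\delta}$ independently generated random RR sets. Then with probability at least $1-\delta$ the following hold for every node $u\in V$: (1) if $I_u\ge T$, then $n\,\mathcal{F_R}(u)\ge T-\frac{\epsilon n}{2}$; (2) if $I_u<T-\epsilon n$, then $n\,\mathcal{F_R}(u)<T-\frac{\epsilon n}{2}$.
   Context: $G=\langle V,E,w\rangle$ is a network with $n=|V|$ under the Linear Threshold or Independent Cascade model (given by its live-edge distribution: LT — each node $v$ independently selects at most one incoming live edge, $(u,v)$ with probability $w_{uv}/W_v$ where $W_v=w_v+\sum_{u}w_{uv}$ includes a self-weight $w_v$; IC — each edge $(u,v)$ is live independently with probability $w_{uv}$). The influence spread $I(S)$ is the expected number of nodes reachable from $S$ via live edges, and $I_u=I(\{u\})$. A random RR set is the set of nodes that can reach a uniformly random node $v\in V$ via live edges in a freshly sampled live-edge graph. $\mathcal{F_R}(u)$ is the fraction of RR sets in $\mathcal{R}$ that contain $u$. *)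

theory Defs
  imports "HOL-Probability.Probability"
begin

(* Nodes have type 'a; the network's node set is a finite set V.
   A live-edge graph is a set of directed edges L :: ('a * 'a) set. *)

definition reach :: "'a set \<Rightarrow> ('a \<times> 'a) set \<Rightarrow> 'a set \<Rightarrow> 'a set" where
  "reach V L S = {v \<in> V. \<exists>u\<in>S. (u, v) \<in> L\<^sup>*}"

definition IC_dist :: "'a set \<Rightarrow> ('a \<Rightarrow> 'a \<Rightarrow> real) \<Rightarrow> ('a \<times> 'a) set pmf" where
  "IC_dist V w =
     map_pmf (\<lambda>f. {e \<in> {(u, v). u \<in> V \<and> v \<in> V \<and> u \<noteq> v}. f e})
       (Pi_pmf {(u, v). u \<in> V \<and> v \<in> V \<and> u \<noteq> v} False
          (\<lambda>(u, v). bernoulli_pmf (w u v)))"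

definition LT_total :: "'a set \<Rightarrow> ('a \<Rightarrow> 'a \<Rightarrow> real) \<Rightarrow> ('a \<Rightarrow> real) \<Rightarrow> 'a \<Rightarrow> real" where
  "LT_total V w ws v = ws v + (\<Sum>u\<in>V - {v}. w u v)"

text \<open>LT model: node v picks in-neighbour u with probability w_uv / W_v and
  no incoming live edge with probability w_v / W_v.\<close>
definition LT_choice :: "'a set \<Rightarrow> ('a \<Rightarrow> 'a \<Rightarrow> real) \<Rightarrow> ('a \<Rightarrow> real) \<Rightarrow> 'a \<Rightarrow> 'a option pmf" where
  "LT_choice V w ws v = embed_pmf (\<lambda>x. case x of
       None \<Rightarrow> ws v / LT_total V w ws v
     | Some u \<Rightarrow> (if u \<in> V \<and> u \<noteq> v then w u v / LT_total V w ws v else 0))"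

definition LT_dist :: "'a set \<Rightarrow> ('a \<Rightarrow> 'a \<Rightarrow> real) \<Rightarrow> ('a \<Rightarrow> real) \<Rightarrow> ('a \<times> 'a) set pmf" where
  "LT_dist V w ws =
     map_pmf (\<lambda>f. {(u, v). v \<in> V \<and> f v = Some u}) (Pi_pmf V None (LT_choice V w ws))"

definition IC_weights :: "'a set \<Rightarrow> ('a \<Rightarrow> 'a \<Rightarrow> real) \<Rightarrow> bool" where
  "IC_weights V w \<longleftrightarrow> (\<forall>u\<in>V. \<forall>v\<in>V. 0 \<le> w u v \<and> w u v \<le> 1)"

definition LT_weights :: "'a set \<Rightarrow> ('a \<Rightarrow> 'a \<Rightarrow> real) \<Rightarrow> ('a \<Rightarrow> real) \<Rightarrow> bool" where
  "LT_weights V w ws \<longleftrightarrow> (\<forall>u\<in>V. \<forall>v\<in>V. 0 \<le> w u v) \<and> (\<forall>v\<in>V. 0 \<le> ws v \<and> 0 < LT_total V w ws v)"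

definition influence :: "'a set \<Rightarrow> ('a \<times> 'a) set pmf \<Rightarrow> 'a set \<Rightarrow> real" where
  "influence V D S = measure_pmf.expectation D (\<lambda>L. real (card (reach V L S)))"

definition RR_pmf :: "'a set \<Rightarrow> ('a \<times> 'a) set pmf \<Rightarrow> 'a set pmf" where
  "RR_pmf V D = do { v \<leftarrow> pmf_of_set V; L \<leftarrow> D; return_pmf {u \<in> V. (u, v) \<in> L\<^sup>*} }"

definition RR_collection :: "'a set \<Rightarrow> ('a \<times> 'a) set pmf \<Rightarrow> nat \<Rightarrow> (nat \<Rightarrow> 'a set) pmf" where
  "RR_collection V D M = Pi_pmf {..<M} {} (\<lambda>_. RR_pmf V D)"

definition frac_cover :: "nat \<Rightarrow> (nat \<Rightarrow> 'a set) \<Rightarrow> 'a \<Rightarrow> real" where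
  "frac_cover M R u = real (card {i \<in> {..<M}. u \<in> R i}) / real M"

end

theory Submission
  imports Defs
begin

text \<open>
  A node u lies in a random RR set with probability I_u / n, so n F_R(u) is an unbiased
  estimate of I_u built from M independent Bernoulli trials. Multiplicative Chernoff bounds
  show that, with the given M, each of the two errors (1) and (2) for a fixed node has
  probability at most \<delta> / (2n); a union bound over the n nodes finishes the proof.
\<close>

lemma prob_RR_pmf_contains:
  assumes fin: "finite V" and ne: "V \<noteq> {}" and u: "u \<in> V"
  shows "measure_pmf.prob (RR_pmf V D) {S. u \<in> S} = influence V D {u} / real (card V)"
proof -
  let ?g = "\<lambda>v L. {u \<in> V. (u, v) \<in> L\<^sup>*}"
  have RR: "RR_pmf V D = pmf_of_set V \<bind> (\<lambda>v. map_pmf (?g v) D)"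
    unfolding RR_pmf_def map_pmf_def by simp
  have "emeasure (measure_pmf (RR_pmf V D)) {S. u \<in> S}
        = (\<Sum>v\<in>V. emeasure (measure_pmf D) {L. (u, v) \<in> L\<^sup>*}) / card V"
    unfolding RR using fin ne u by (simp add: nn_integral_pmf_of_set vimage_def)
  also have "\<dots> = ennreal ((\<Sum>v\<in>V. measure_pmf.prob D {L. (u, v) \<in> L\<^sup>*}) / card V)"
    using fin ne
    by (simp add: measure_pmf.emeasure_eq_measure ennreal_of_nat_eq_real_of_nat,
        intro divide_ennreal) (auto intro: sum_nonneg simp: card_gt_0_iff)
  finally have prob_eq: "measure_pmf.prob (RR_pmf V D) {S. u \<in> S}
      = (\<Sum>v\<in>V. measure_pmf.prob D {L. (u, v) \<in> L\<^sup>*}) / card V"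
    by (simp add: measure_pmf.emeasure_eq_measure sum_nonneg)
  have "(\<Sum>v\<in>V. measure_pmf.prob D {L. (u, v) \<in> L\<^sup>*})
      = measure_pmf.expectation D (\<lambda>L. \<Sum>v\<in>V. indicator {L. (u, v) \<in> L\<^sup>*} L)"
    by (subst Bochner_Integration.integral_sum)
       (auto simp: measure_pmf.emeasure_eq_measure)
  also have "\<dots> = influence V D {u}"
    unfolding influence_def reach_def
    by (intro Bochner_Integration.integral_cong refl)
       (simp add: indicator_def of_bool_def sum.If_cases fin Int_def)
  finally show ?thesis using prob_eq by simp
qed

definition hit_count :: "nat \<Rightarrow> (nat \<Rightarrow> 'b) \<Rightarrow> 'b set \<Rightarrow> real" where
  "hit_count M R A = real (card {i \<in> {..<M}. R i \<in> A})"

lemma hit_count_nonneg: "0 \<le> hit_count M R A"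
  by (simp add: hit_count_def)

lemma hit_count_le: "hit_count M R A \<le> real M"
proof -
  have "card {i \<in> {..<M}. R i \<in> A} \<le> card {..<M}"
    by (rule card_mono) auto
  then show ?thesis by (simp add: hit_count_def)
qed

lemma hit_count_eq_sum: "hit_count M R A = (\<Sum>i<M. indicator A (R i))"
  unfolding hit_count_def by (simp add: indicator_def of_bool_def sum.If_cases Int_def)

lemma expectation_exp_hit_count:
  "measure_pmf.expectation (Pi_pmf {..<M} dflt (\<lambda>_. P)) (\<lambda>R. exp (l * hit_count M R A))
     = (1 + (exp l - 1) * measure_pmf.prob P A) ^ M"
proof -
  have exp_indicator: "(\<lambda>S. exp (l * indicator A S)) = (\<lambda>S. 1 + (exp l - 1) * indicator A S)"
    by (auto simp: indicator_def)
  have integrable: "integrable (measure_pmf P) (\<lambda>S. exp (l * indicator A S))"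
    by (rule measure_pmf.integrable_const_bound[where B = "exp \<bar>l\<bar>"]) (auto simp: indicator_def)
  have single: "measure_pmf.expectation P (\<lambda>S. exp (l * indicator A S))
      = 1 + (exp l - 1) * measure_pmf.prob P A"
    unfolding exp_indicator by (simp add: measure_pmf.emeasure_eq_measure)
  have exp_hit_count: "(\<lambda>R. exp (l * hit_count M R A)) = (\<lambda>R. \<Prod>i<M. exp (l * indicator A (R i)))"
    unfolding hit_count_eq_sum sum_distrib_left by (simp only: exp_sum finite_lessThan)
  show ?thesis
    unfolding exp_hit_count by (subst expectation_prod_Pi_pmf) (auto simp: integrable single)
qed

text \<open>Exponential-moment (Chernoff) bound; the sign of l selects the tail.\<close>
lemma prob_hit_count_exp_moment:
  "measure_pmf.prob (Pi_pmf {..<M} dflt (\<lambda>_. P)) {R. l * c \<le> l * hit_count M R A}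
     \<le> (1 + (exp l - 1) * measure_pmf.prob P A) ^ M / exp (l * c)"
proof -
  let ?Q = "Pi_pmf {..<M} dflt (\<lambda>_. P)"
  have bounded: "l * hit_count M R A \<le> \<bar>l\<bar> * M" for R
  proof -
    have "l * hit_count M R A \<le> \<bar>l\<bar> * hit_count M R A"
      using hit_count_nonneg by (intro mult_right_mono) auto
    also have "\<dots> \<le> \<bar>l\<bar> * M"
      using hit_count_le by (intro mult_left_mono) auto
    finally show ?thesis .
  qed
  have "integrable (measure_pmf ?Q) (\<lambda>R. exp (l * hit_count M R A))"
    by (rule measure_pmf.integrable_const_bound[where B = "exp (\<bar>l\<bar> * M)"]) (auto simp: bounded)
  from integral_Markov_inequality_measure[OF this, of UNIV "exp (l * c)"]
  show ?thesis by (simp add: expectation_exp_hit_count)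
qed

lemma exp_minus_le_quadratic:
  fixes l :: real assumes "0 \<le> l" shows "exp (- l) \<le> 1 - l + l\<^sup>2 / 2"
proof -
  let ?f = "\<lambda>x::real. 1 - x + x\<^sup>2 / 2 - exp (- x)"
  have "?f 0 \<le> ?f l"
  proof (rule DERIV_nonneg_imp_nondecreasing[OF assms])
    fix x :: real
    have "DERIV ?f x :> (- 1 + x + exp (- x))"
      by (auto intro!: derivative_eq_intros simp: power2_eq_square)
    moreover have "0 \<le> - 1 + x + exp (- x)" using exp_ge_add_one_self[of "- x"] by linarith
    ultimately show "\<exists>y. DERIV ?f x :> y \<and> 0 \<le> y" by blast
  qed
  then show ?thesis by simp
qed

lemma quadratic_le_minus_ln_one_minus:
  fixes y :: real assumes "0 \<le> y" "y < 1" shows "y + y\<^sup>2 / 2 \<le> - ln (1 - y)"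
proof -
  let ?f = "\<lambda>x::real. - ln (1 - x) - x - x\<^sup>2 / 2"
  have "?f 0 \<le> ?f y"
  proof (rule DERIV_nonneg_imp_nondecreasing[OF assms(1)])
    fix x :: real assume "x \<le> y"
    then have "x < 1" using assms by linarith
    have "DERIV ?f x :> (1 / (1 - x) - 1 - x)"
      using \<open>x < 1\<close> by (auto intro!: derivative_eq_intros simp: power2_eq_square field_simps)
    moreover have "1 / (1 - x) - 1 - x = x\<^sup>2 / (1 - x)"
      using \<open>x < 1\<close> by (simp add: field_simps power2_eq_square)
    ultimately show "\<exists>y. DERIV ?f x :> y \<and> 0 \<le> y" using \<open>x < 1\<close> by auto
  qed
  then show ?thesis by simp
qed

lemma one_plus_power_le_exp:
  fixes x :: real assumes "- 1 \<le> x" shows "(1 + x) ^ M \<le> exp (real M * x)"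
proof -
  have "(1 + x) ^ M \<le> exp x ^ M"
    by (rule power_mono) (use assms exp_ge_add_one_self[of x] in auto)
  then show ?thesis by (simp add: exp_of_nat_mult)
qed

lemma prob_hit_count_lower_tail:
  fixes P :: "'b pmf" and A :: "'b set"
  defines "p \<equiv> measure_pmf.prob P A"
  assumes "0 < a" "a < p"
  shows "measure_pmf.prob (Pi_pmf {..<M} dflt (\<lambda>_. P)) {R. hit_count M R A \<le> M * a}
           \<le> exp (- real M * (p - a)\<^sup>2 / (2 * p))"
proof -
  have p: "0 < p" "p \<le> 1" using assms by (auto simp: p_def)
  define l where "l = (p - a) / p"
  have l: "0 \<le> l" using p assms by (simp add: l_def)
  have "measure_pmf.prob (Pi_pmf {..<M} dflt (\<lambda>_. P)) {R. hit_count M R A \<le> M * a}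
      \<le> measure_pmf.prob (Pi_pmf {..<M} dflt (\<lambda>_. P)) {R. - l * (M * a) \<le> - l * hit_count M R A}"
    using l by (intro measure_pmf.finite_measure_mono) (auto intro: mult_left_mono)
  also have "\<dots> \<le> (1 + (exp (- l) - 1) * p) ^ M / exp (- l * (M * a))"
    unfolding p_def by (rule prob_hit_count_exp_moment)
  also have "\<dots> \<le> exp (M * ((exp (- l) - 1) * p)) / exp (- l * (M * a))"
  proof (intro divide_right_mono one_plus_power_le_exp)
    have "exp (- l) - 1 \<le> (exp (- l) - 1) * p"
      using mult_left_mono_neg[of p 1 "exp (- l) - 1"] l p by simp
    then show "- 1 \<le> (exp (- l) - 1) * p" using exp_gt_zero[of "- l"] by linarith
  qed simp
  also have "\<dots> = exp (M * ((exp (- l) - 1) * p + l * a))"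
    by (simp add: exp_diff [symmetric] algebra_simps)
  also have "\<dots> \<le> exp (M * ((- l + l\<^sup>2 / 2) * p + l * a))"
    using exp_minus_le_quadratic[OF l] p by (intro exp_mono mult_left_mono add_right_mono mult_right_mono) auto
  also have "(- l + l\<^sup>2 / 2) * p + l * a = - (p - a)\<^sup>2 / (2 * p)"
    using p by (simp add: l_def field_simps power2_eq_square)
  finally show ?thesis by simp
qed

lemma prob_hit_count_upper_tail:
  fixes P :: "'b pmf" and A :: "'b set"
  defines "p \<equiv> measure_pmf.prob P A"
  assumes "p < a"
  shows "measure_pmf.prob (Pi_pmf {..<M} dflt (\<lambda>_. P)) {R. M * a \<le> hit_count M R A}
           \<le> exp (- real M * (a - p)\<^sup>2 / (2 * a))"
proof (cases "p = 0")
  case True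
  \<comment> \<open>the optimal parameter l = ln (a / p) of the other case needs p > 0\<close>
  have "measure_pmf.prob (Pi_pmf {..<M} dflt (\<lambda>_. P)) {R. M * a \<le> hit_count M R A}
      \<le> measure_pmf.prob (Pi_pmf {..<M} dflt (\<lambda>_. P)) {R. 1/2 * (M * a) \<le> 1/2 * hit_count M R A}"
    by simp
  also have "\<dots> \<le> (1 + (exp (1/2) - 1) * p) ^ M / exp (1/2 * (M * a))"
    unfolding p_def by (rule prob_hit_count_exp_moment)
  also have "\<dots> = exp (- real M * (a - p)\<^sup>2 / (2 * a))"
    using True \<open>p < a\<close> by (simp add: power2_eq_square exp_minus field_simps)
  finally show ?thesis .
next
  case False
  have p: "0 < p" using False by (simp add: p_def less_le)
  define l where "l = ln (a / p)"
  have exp_l: "exp l = a / p" and l: "0 \<le> l"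
    using p \<open>p < a\<close> by (simp_all add: l_def)
  have "measure_pmf.prob (Pi_pmf {..<M} dflt (\<lambda>_. P)) {R. M * a \<le> hit_count M R A}
      \<le> measure_pmf.prob (Pi_pmf {..<M} dflt (\<lambda>_. P)) {R. l * (M * a) \<le> l * hit_count M R A}"
    using l by (intro measure_pmf.finite_measure_mono) (auto intro: mult_left_mono)
  also have "\<dots> \<le> (1 + (exp l - 1) * p) ^ M / exp (l * (M * a))"
    unfolding p_def by (rule prob_hit_count_exp_moment)
  also have "\<dots> \<le> exp (M * ((exp l - 1) * p)) / exp (l * (M * a))"
    using p exp_l \<open>p < a\<close> by (intro divide_right_mono one_plus_power_le_exp) (simp_all add: field_simps)
  also have "\<dots> = exp (M * ((a - p) - a * l))"
    using p exp_l by (simp add: exp_diff [symmetric] field_simps)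
  also have "\<dots> \<le> exp (- real M * (a - p)\<^sup>2 / (2 * a))"
  proof -
    define y where "y = 1 - p / a"
    have y: "0 \<le> y" "y < 1" using p \<open>p < a\<close> by (auto simp: y_def)
    have "l = - ln (1 - y)" using p \<open>p < a\<close> by (simp add: l_def y_def ln_div)
    then have "y + y\<^sup>2 / 2 \<le> l" using quadratic_le_minus_ln_one_minus[OF y] by simp
    then have "a * (y + y\<^sup>2 / 2) \<le> a * l" using p \<open>p < a\<close> by simp
    moreover have "a * (y + y\<^sup>2 / 2) = (a - p) + (a - p)\<^sup>2 / (2 * a)"
      using p \<open>p < a\<close> by (simp add: y_def field_simps power2_eq_square)
    ultimately have "(a - p) - a * l \<le> - (a - p)\<^sup>2 / (2 * a)" by linarith
    then have "M * ((a - p) - a * l) \<le> M * (- (a - p)\<^sup>2 / (2 * a))"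
      by (intro mult_left_mono) auto
    then show ?thesis by simp
  qed
  finally show ?thesis .
qed

lemma sq_dist_div_mono:
  fixes a t p :: real
  assumes "0 < a" "a \<le> t" "t \<le> p"
  shows "(t - a)\<^sup>2 / t \<le> (p - a)\<^sup>2 / p"
proof -
  have "(p - a)\<^sup>2 * t - (t - a)\<^sup>2 * p = (p - t) * (p * t - a\<^sup>2)"
    by (simp add: algebra_simps power2_eq_square)
  moreover have "a\<^sup>2 \<le> p * t"
    using assms by (simp add: power2_eq_square mult_mono)
  ultimately have "(t - a)\<^sup>2 * p \<le> (p - a)\<^sup>2 * t"
    using assms by (smt (verit) mult_nonneg_nonneg)
  then show ?thesis using assms by (simp add: divide_simps)
qed

lemma exp_chernoff_exponent_le:
  fixes t \<epsilon> L E :: real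
  assumes "12 * t * L / \<epsilon>\<^sup>2 \<le> M" "0 \<le> L" "0 < t" "0 < \<epsilon>" "\<epsilon>\<^sup>2 / (8 * t) \<le> E"
  shows "exp (- real M * E) \<le> exp (- L)"
proof -
  have "12 * t * L / \<epsilon>\<^sup>2 * (\<epsilon>\<^sup>2 / (8 * t)) \<le> real M * E"
    using assms by (intro mult_mono) auto
  also have "12 * t * L / \<epsilon>\<^sup>2 * (\<epsilon>\<^sup>2 / (8 * t)) = 3 / 2 * L"
    using assms by (simp add: field_simps)
  finally show ?thesis using assms by simp
qed

lemma frac_cover_eq_hit_count: "frac_cover M R u = hit_count M R {S. u \<in> S} / M"
  by (simp add: frac_cover_def hit_count_def)

lemma frac_cover_nonneg: "0 \<le> frac_cover M R u"
  by (simp add: frac_cover_def)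

lemma prob_frac_cover_below_threshold:
  fixes P :: "'a set pmf" and u :: 'a
  defines "p \<equiv> measure_pmf.prob P {S. u \<in> S}"
  assumes "t \<le> p" "0 < t" "0 < \<epsilon>" "0 \<le> L" "12 * t * L / \<epsilon>\<^sup>2 \<le> M"
  shows "measure_pmf.prob (Pi_pmf {..<M} {} (\<lambda>_. P)) {R. frac_cover M R u < t - \<epsilon> / 2} \<le> exp (- L)"
proof (cases "0 < t - \<epsilon> / 2")
  case False
  have "t - \<epsilon> / 2 \<le> frac_cover M R u" for R
    using False frac_cover_nonneg[of M R u] by linarith
  then have "{R. frac_cover M R u < t - \<epsilon> / 2} = {}"
    using not_le by blast
  then show ?thesis by simp
next
  case True
  define a where "a = t - \<epsilon> / 2"
  have a: "0 < a" "a \<le> t" "a < p" using True assms by (auto simp: a_def)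
  have "measure_pmf.prob (Pi_pmf {..<M} {} (\<lambda>_. P)) {R. frac_cover M R u < a}
      \<le> measure_pmf.prob (Pi_pmf {..<M} {} (\<lambda>_. P)) {R. hit_count M R {S. u \<in> S} \<le> M * a}"
    by (intro measure_pmf.finite_measure_mono)
       (auto simp: frac_cover_eq_hit_count divide_less_eq mult.commute hit_count_def split: if_splits)
  also have "\<dots> \<le> exp (- real M * ((p - a)\<^sup>2 / (2 * p)))"
    using prob_hit_count_lower_tail[OF a(1) a(3)[unfolded p_def]] by (simp add: p_def)
  also have "\<dots> \<le> exp (- L)"
  proof (rule exp_chernoff_exponent_le)
    have "(t - a)\<^sup>2 / t \<le> (p - a)\<^sup>2 / p"
      using sq_dist_div_mono a \<open>t \<le> p\<close> by blast
    moreover have "(t - a)\<^sup>2 / t = \<epsilon>\<^sup>2 / (4 * t)"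
      by (simp add: a_def field_simps power2_eq_square)
    ultimately show "\<epsilon>\<^sup>2 / (8 * t) \<le> (p - a)\<^sup>2 / (2 * p)" by simp
  qed (use assms in auto)
  finally show ?thesis by (simp add: a_def)
qed

lemma prob_frac_cover_above_threshold:
  fixes P :: "'a set pmf" and u :: 'a
  defines "p \<equiv> measure_pmf.prob P {S. u \<in> S}"
  assumes "p < t - \<epsilon>" "0 < t" "0 < \<epsilon>" "0 \<le> L" "12 * t * L / \<epsilon>\<^sup>2 \<le> M"
  shows "measure_pmf.prob (Pi_pmf {..<M} {} (\<lambda>_. P)) {R. t - \<epsilon> / 2 \<le> frac_cover M R u} \<le> exp (- L)"
proof -
  define a where "a = t - \<epsilon> / 2"
  have "0 \<le> p" by (simp add: p_def)
  then have a: "0 < a" "a \<le> t" "p < a" "\<epsilon> / 2 \<le> a - p"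
    using \<open>p < t - \<epsilon>\<close> \<open>0 < \<epsilon>\<close> by (auto simp: a_def)
  have "measure_pmf.prob (Pi_pmf {..<M} {} (\<lambda>_. P)) {R. a \<le> frac_cover M R u}
      \<le> measure_pmf.prob (Pi_pmf {..<M} {} (\<lambda>_. P)) {R. M * a \<le> hit_count M R {S. u \<in> S}}"
    using a by (intro measure_pmf.finite_measure_mono)
       (auto simp: frac_cover_eq_hit_count le_divide_eq mult.commute split: if_splits)
  also have "\<dots> \<le> exp (- real M * ((a - p)\<^sup>2 / (2 * a)))"
    using prob_hit_count_upper_tail[OF a(3)[unfolded p_def]] by (simp add: p_def)
  also have "\<dots> \<le> exp (- L)"
  proof (rule exp_chernoff_exponent_le)
    have "(\<epsilon> / 2)\<^sup>2 / (2 * t) \<le> (a - p)\<^sup>2 / (2 * a)"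
      using a assms by (intro frac_le power_mono) auto
    then show "\<epsilon>\<^sup>2 / (8 * t) \<le> (a - p)\<^sup>2 / (2 * a)"
      by (simp add: power2_eq_square)
  qed (use assms in auto)
  finally show ?thesis by (simp add: a_def)
qed

lemma prob_frac_cover_threshold_error:
  fixes P :: "'a set pmf" and u :: 'a
  defines "p \<equiv> measure_pmf.prob P {S. u \<in> S}"
  assumes "0 < t" "0 < \<epsilon>" "0 \<le> L" "12 * t * L / \<epsilon>\<^sup>2 \<le> M"
  shows "measure_pmf.prob (Pi_pmf {..<M} {} (\<lambda>_. P))
           {R. \<not> ((t \<le> p \<longrightarrow> t - \<epsilon> / 2 \<le> frac_cover M R u) \<and>
                  (p < t - \<epsilon> \<longrightarrow> frac_cover M R u < t - \<epsilon> / 2))} \<le> exp (- L)"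
proof -
  consider "t \<le> p" | "p < t - \<epsilon>" | "\<not> t \<le> p" "\<not> p < t - \<epsilon>" by blast
  then show ?thesis
  proof cases
    case 1
    with \<open>0 < \<epsilon>\<close> show ?thesis
      using prob_frac_cover_below_threshold[of t P u \<epsilon> L M] assms by (simp add: not_le p_def)
  next
    case 2
    with \<open>0 < \<epsilon>\<close> show ?thesis
      using prob_frac_cover_above_threshold[of P u t \<epsilon> L M] assms by (simp add: not_less p_def)
  qed simp
qed

lemma prob_all_ge_one_minus_sum:
  assumes "finite V"
  shows "measure_pmf.prob Q {x. \<forall>u\<in>V. G u x} \<ge> 1 - (\<Sum>u\<in>V. measure_pmf.prob Q {x. \<not> G u x})"
proof -
  let ?B = "\<Union>u\<in>V. {x. \<not> G u x}"
  have good: "{x. \<forall>u\<in>V. G u x} = space (measure_pmf Q) - ?B"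
    by auto
  have "measure_pmf.prob Q ?B \<le> (\<Sum>u\<in>V. measure_pmf.prob Q {x. \<not> G u x})"
    using assms by (intro measure_pmf.finite_measure_subadditive_finite) auto
  moreover have "measure_pmf.prob Q (space (measure_pmf Q) - ?B) = 1 - measure_pmf.prob Q ?B"
    by (rule measure_pmf.prob_compl) auto
  ultimately show ?thesis
    unfolding good by linarith
qed

theorem theorem5p3:
  fixes V :: "'a set" and w :: "'a \<Rightarrow> 'a \<Rightarrow> real" and ws :: "'a \<Rightarrow> real"
    and D :: "('a \<times> 'a) set pmf" and T \<epsilon> \<delta> :: real and n M :: nat
  assumes "finite V" and "V \<noteq> {}" and "n = card V"
    and "(IC_weights V w \<and> D = IC_dist V w) \<or> (LT_weights V w ws \<and> D = LT_dist V w ws)"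
    and "T > 0" and "\<epsilon> > 0" and "0 < \<delta>" and "\<delta> < 1"
    and "M = nat \<lceil>12 * T / (real n * \<epsilon>\<^sup>2) * ln (2 * real n / \<delta>)\<rceil>"
  shows "measure_pmf.prob (RR_collection V D M)
           {R. \<forall>u\<in>V.
                 (influence V D {u} \<ge> T \<longrightarrow> real n * frac_cover M R u \<ge> T - \<epsilon> * real n / 2) \<and>
                 (influence V D {u} < T - \<epsilon> * real n \<longrightarrow> real n * frac_cover M R u < T - \<epsilon> * real n / 2)}
         \<ge> 1 - \<delta>"
proof -
  let ?good = "\<lambda>u R.
    (influence V D {u} \<ge> T \<longrightarrow> real n * frac_cover M R u \<ge> T - \<epsilon> * real n / 2) \<and>
    (influence V D {u} < T - \<epsilon> * real n \<longrightarrow> real n * frac_cover M R u < T - \<epsilon> * real n / 2)"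
  have n: "0 < n" using assms(1-3) by (simp add: card_gt_0_iff)
  define t where "t = T / n"
  define L where "L = ln (2 * real n / \<delta>)"
  have L: "0 \<le> L" and exp_L: "exp (- L) = \<delta> / (2 * n)"
    using n assms(7,8) by (simp_all add: L_def exp_minus)
  have M: "12 * t * L / \<epsilon>\<^sup>2 \<le> M"
    using assms(9) by (simp add: t_def L_def) linarith
  have node_error: "measure_pmf.prob (RR_collection V D M) {R. \<not> ?good u R} \<le> \<delta> / (2 * n)"
    if "u \<in> V" for u
  proof -
    have scale: "T \<le> n * x \<longleftrightarrow> t \<le> x" "n * x < T - \<epsilon> * n \<longleftrightarrow> x < t - \<epsilon>"
      "T - \<epsilon> * n / 2 \<le> n * x \<longleftrightarrow> t - \<epsilon> / 2 \<le> x" "n * x < T - \<epsilon> * n / 2 \<longleftrightarrow> x < t - \<epsilon> / 2"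
      for x :: real
      using n by (simp_all add: t_def field_simps)
    have "influence V D {u} = n * measure_pmf.prob (RR_pmf V D) {S. u \<in> S}"
      using prob_RR_pmf_contains[OF assms(1,2) that] n assms(3) by simp
    then show ?thesis
      using prob_frac_cover_threshold_error[of t \<epsilon> L M "RR_pmf V D" u] n assms(5,6) L M
      by (simp only: scale RR_collection_def exp_L) (simp add: t_def)
  qed
  have "(\<Sum>u\<in>V. measure_pmf.prob (RR_collection V D M) {R. \<not> ?good u R}) \<le> \<delta> / 2"
    using sum_mono[of V, OF node_error] n assms(3) by simp
  then show ?thesis
    using prob_all_ge_one_minus_sum[OF assms(1), of "RR_collection V D M" ?good] assms(7) by linarith
qed

end
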